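(* Let $A$ be a $2\times n$ array with pairwise distinct entries and let $k\ge 1$. The DAG $D^k_A$ has at most $6kn$ nodes.
   Context: For a $2\times n$ array $A$ with distinct entries from a total order and $1\le a\le b\le n$, let Top-$k([a,b])$ denote the set of positions of the $k$ largest values in $A[1..2][a..b]$ (rows 1 and 2, columns $a..b$). The DAG $D^k_A$ has nodes labelled by intervals $[a,b]$, $1\le a\le b\le n$, with nodes identified by their labels, defined inductively: the root is $[1,n]$; a node $[a,b]$ is a leaf (has no children) if $2(b-a+1)\le k$; otherwise, letting $a'$ and $b'$ ($a\le a'\le b'\le b$) be the smallest and largest column indices among the positions in Top-$k([a,b])$, the node $[a,b]$ has left child $[a,b'-1]$ if $a<b'$ and right child $[a'+1,b]$ if $a'<b$. The nodes of $D^k_A$ are exactly those reachable from the root. *)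

theory Defs
  imports Main
begin

text \<open>A 2 x n array is a function A :: nat \<Rightarrow> nat \<Rightarrow> 'a, A i j = entry in row i, column j,
  used for rows 1,2 and columns 1..n. Intervals [a,b] are pairs (a,b).\<close>

definition positions :: "nat \<Rightarrow> nat \<Rightarrow> (nat \<times> nat) set" where
  "positions a b = {1,2} \<times> {a..b}"

definition topk :: "(nat \<Rightarrow> nat \<Rightarrow> 'a::linorder) \<Rightarrow> nat \<Rightarrow> nat \<Rightarrow> nat \<Rightarrow> (nat \<times> nat) set" where
  "topk A k a b = {p \<in> positions a b.
      card {q \<in> positions a b. A (fst q) (snd q) > A (fst p) (snd p)} < k}"

definition children :: "(nat \<Rightarrow> nat \<Rightarrow> 'a::linorder) \<Rightarrow> nat \<Rightarrow> nat \<times> nat \<Rightarrow> (nat \<times> nat) set" where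
  "children A k ab = (case ab of (a, b) \<Rightarrow>
     (if 2 * (b - a + 1) \<le> k then {}
      else (let a' = Min (snd ` topk A k a b); b' = Max (snd ` topk A k a b) in
            (if a < b' then {(a, b' - 1)} else {}) \<union> (if a' < b then {(a' + 1, b)} else {}))))"

inductive_set dag_nodes :: "(nat \<Rightarrow> nat \<Rightarrow> 'a::linorder) \<Rightarrow> nat \<Rightarrow> nat \<Rightarrow> (nat \<times> nat) set"
  for A k n where
  root: "(1, n) \<in> dag_nodes A k n"
| child: "ab \<in> dag_nodes A k n \<Longrightarrow> c \<in> children A k ab \<Longrightarrow> c \<in> dag_nodes A k n"

end

theory Submission
  imports Defs
begin

text \<open>Every node [a, b] is pinned by its neighbour columns: unless b = n, column b + 1 holds one
  of the k largest entries of [a, b + 1], and unless a = 1, column a - 1 holds one of the k largest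
  entries of [a - 1, b]. Charge an interior node to whichever neighbour column has the smaller
  maximum, say column a - 1 with maximum x. If [a, b_1], ..., [a, b_m] with b_1 < ... < b_m are charged
  to a - 1, then the columns b_1 + 1, ..., b_(m-1) + 1 lie in [a - 1, b_m] and contain entries above x,
  which is among the k largest entries there; hence m \<le> k. So each column is charged at most 2k
  times, and together with the at most 2n border nodes this gives 2n + 2kn \<le> 6kn nodes.\<close>

definition count_greater :: "(nat \<Rightarrow> nat \<Rightarrow> 'a::linorder) \<Rightarrow> nat \<Rightarrow> nat \<Rightarrow> 'a \<Rightarrow> nat" where
  "count_greater A a b x = card {q \<in> positions a b. x < A (fst q) (snd q)}"

definition col_max :: "(nat \<Rightarrow> nat \<Rightarrow> 'a::linorder) \<Rightarrow> nat \<Rightarrow> 'a" where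
  "col_max A j = max (A 1 j) (A 2 j)"

lemma finite_positions [simp]: "finite (positions a b)"
  by (simp add: positions_def)

lemma topk_subset_positions: "topk A k a b \<subseteq> positions a b"
  by (auto simp: topk_def)

lemma topk_nonempty:
  assumes "a \<le> b" "0 < k"
  shows "topk A k a b \<noteq> {}"
proof -
  let ?val = "\<lambda>q. A (fst q) (snd q)"
  have "positions a b \<noteq> {}"
    using assms(1) by (auto simp: positions_def)
  then have "Max (?val ` positions a b) \<in> ?val ` positions a b"
    by (intro Max_in) auto
  then obtain p where p: "p \<in> positions a b" "?val p = Max (?val ` positions a b)"
    by auto
  then have "{q \<in> positions a b. ?val p < ?val q} = {}"
    using Max_ge[of "?val ` positions a b"] by fastforce
  then have "card {q \<in> positions a b. ?val p < ?val q} < k"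
    using assms(2) by (simp only: card.empty)
  then have "p \<in> topk A k a b"
    using p(1) unfolding topk_def by blast
  then show ?thesis
    by blast
qed

lemma topk_subinterval:
  assumes "p \<in> topk A k c d" "p \<in> positions a b" "c \<le> a" "b \<le> d"
  shows "p \<in> topk A k a b"
proof -
  have "positions a b \<subseteq> positions c d"
    using assms(3,4) by (auto simp: positions_def)
  then have "card {q \<in> positions a b. A (fst p) (snd p) < A (fst q) (snd q)}
      \<le> card {q \<in> positions c d. A (fst p) (snd p) < A (fst q) (snd q)}"
    by (intro card_mono) auto
  then show ?thesis
    using assms(1,2) by (auto simp: topk_def)
qed

lemma count_greater_col_max_lt:
  assumes "(i, j) \<in> topk A k a b"
  shows "count_greater A a b (col_max A j) < k"
proof -
  have "A i j \<le> col_max A j"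
    using assms by (auto simp: topk_def positions_def col_max_def)
  then have "count_greater A a b (col_max A j) \<le> count_greater A a b (A i j)"
    unfolding count_greater_def by (intro card_mono) auto
  also have "\<dots> < k"
    using assms by (simp add: topk_def count_greater_def)
  finally show ?thesis .
qed

lemma col_max_inj_on:
  assumes "inj_on (\<lambda>(i, j). A i j) ({1, 2} \<times> {1..n})"
  shows "inj_on (col_max A) {1..n}"
proof (rule inj_onI)
  fix j j' assume j: "j \<in> {1..n}" "j' \<in> {1..n}" and eq: "col_max A j = col_max A j'"
  have "\<exists>i \<in> {1, 2}. col_max A l = A i l" for l
    by (auto simp: col_max_def max_def)
  then obtain i i' where "i \<in> {1, 2}" "i' \<in> {1, 2}" "col_max A j = A i j" "col_max A j' = A i' j'"
    by meson
  with j eq inj_onD[OF assms, of "(i, j)" "(i', j')"] show "j = j'"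
    by auto
qed

lemma card_columns_exceeding_le_count_greater:
  assumes "J \<subseteq> {a..b}" "\<And>j. j \<in> J \<Longrightarrow> x < col_max A j"
  shows "card J \<le> count_greater A a b x"
proof -
  define pos where "pos j = (if x < A 1 j then (1::nat, j) else (2, j))" for j
  have "inj_on pos J"
    by (rule inj_onI) (auto simp: pos_def split: if_splits)
  moreover have "pos j \<in> positions a b" "x < A (fst (pos j)) (snd (pos j))" if "j \<in> J" for j
    using assms(1) assms(2)[OF that] that by (auto simp: pos_def positions_def col_max_def less_max_iff_disj)
  then have "pos ` J \<subseteq> {q \<in> positions a b. x < A (fst q) (snd q)}"
    by blast
  ultimately show ?thesis
    unfolding count_greater_def by (simp add: card_image[symmetric] card_mono)
qed

lemma card_right_ends_le:
  assumes "finite B"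
    and "\<And>b. b \<in> B \<Longrightarrow> a \<le> b \<and> count_greater A a b x < k \<and> x < col_max A (Suc b)"
  shows "card B \<le> k"
proof (cases "B = {}")
  case False
  define m where "m = Max B"
  have m: "m \<in> B" "\<And>b. b \<in> B \<Longrightarrow> b \<le> m"
    using False assms(1) by (auto simp: m_def)
  have "card (B - {m}) = card (Suc ` (B - {m}))"
    by (simp add: card_image)
  also have "\<dots> \<le> count_greater A a m x"
  proof (rule card_columns_exceeding_le_count_greater)
    show "Suc ` (B - {m}) \<subseteq> {a..m}"
      using m assms(2) by (force simp: Suc_le_eq le_neq_implies_less)
  qed (use assms(2) in auto)
  also have "\<dots> < k"
    using assms(2) m(1) by blast
  finally show ?thesis
    using m(1) assms(1) by (simp add: card_Diff_singleton)
qed simp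

lemma card_left_ends_le:
  assumes "finite C"
    and "\<And>a. a \<in> C \<Longrightarrow> a \<le> b \<and> count_greater A a b x < k \<and> x < col_max A (a - 1)"
  shows "card C \<le> k"
proof (cases "C = {}")
  case False
  define m where "m = Min C"
  have m: "m \<in> C" "\<And>a. a \<in> C \<Longrightarrow> m \<le> a"
    using False assms(1) by (auto simp: m_def)
  have "inj_on (\<lambda>a. a - 1) (C - {m})"
    using m(2) by (force intro: inj_onI)
  then have "card (C - {m}) = card ((\<lambda>a. a - 1) ` (C - {m}))"
    by (simp add: card_image)
  also have "\<dots> \<le> count_greater A m b x"
  proof (rule card_columns_exceeding_le_count_greater)
    show "(\<lambda>a. a - 1) ` (C - {m}) \<subseteq> {m..b}"
      using m assms(2) by (force simp: le_neq_implies_less)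
  qed (use assms(2) in auto)
  also have "\<dots> < k"
    using assms(2) m(1) by blast
  finally show ?thesis
    using m(1) assms(1) by (simp add: card_Diff_singleton)
qed simp

lemma children_at_topk_column:
  assumes "c \<in> children A k (a, b)" "a \<le> b" "0 < k"
  obtains i j where "(i, j) \<in> topk A k a b"
    and "(a < j \<and> c = (a, j - 1)) \<or> (j < b \<and> c = (Suc j, b))"
proof -
  let ?J = "snd ` topk A k a b"
  have "finite ?J"
    by (intro finite_imageI finite_subset[OF topk_subset_positions finite_positions])
  moreover have "?J \<noteq> {}"
    using topk_nonempty[OF assms(2,3)] by blast
  ultimately have "Max ?J \<in> ?J" "Min ?J \<in> ?J"
    by simp_all
  moreover have "(a < Max ?J \<and> c = (a, Max ?J - 1)) \<or> (Min ?J < b \<and> c = (Suc (Min ?J), b))"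
    using assms(1) by (auto simp: children_def Let_def split: if_splits)
  ultimately show ?thesis
    using that by force
qed

lemma dag_nodes_pinned:
  assumes "(a, b) \<in> dag_nodes A k n" "0 < k" "1 \<le> n"
  shows "1 \<le> a \<and> a \<le> b \<and> b \<le> n
    \<and> (b = n \<or> (\<exists>i. (i, Suc b) \<in> topk A k a (Suc b)))
    \<and> (a = 1 \<or> (\<exists>i. (i, a - 1) \<in> topk A k (a - 1) b))"
  using assms(1)
proof (induction "(a, b)" arbitrary: a b rule: dag_nodes.induct)
  case root
  then show ?case
    using assms(3) by simp
next
  case (child ab a b)
  obtain a\<^sub>0 b\<^sub>0 where ab: "ab = (a\<^sub>0, b\<^sub>0)"
    by fastforce
  note IH = child.hyps(2)[OF ab]
  obtain i j where ij: "(i, j) \<in> topk A k a\<^sub>0 b\<^sub>0"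
    and c: "(a\<^sub>0 < j \<and> (a, b) = (a\<^sub>0, j - 1)) \<or> (j < b\<^sub>0 \<and> (a, b) = (Suc j, b\<^sub>0))"
    using children_at_topk_column[OF child.hyps(3)[unfolded ab] _ assms(2)] IH by blast
  have j: "a\<^sub>0 \<le> j" "j \<le> b\<^sub>0"
    using ij topk_subset_positions[of A k a\<^sub>0 b\<^sub>0] by (auto simp: positions_def)
  have shrink: "(i', j') \<in> topk A k c' d'"
    if "(i', j') \<in> topk A k c d" "c \<le> c'" "d' \<le> d" "c' \<le> j'" "j' \<le> d'" for i' j' c d c' d'
    using that topk_subset_positions[of A k c d]
    by (intro topk_subinterval[OF that(1)]) (auto simp: positions_def)
  from c show ?case
  proof
    assume left: "a\<^sub>0 < j \<and> (a, b) = (a\<^sub>0, j - 1)"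
    have "(i, j) \<in> topk A k a\<^sub>0 j"
      by (rule shrink[OF ij]) (use j in auto)
    then have "(i, Suc b) \<in> topk A k a (Suc b)"
      using left by auto
    moreover have "a = 1 \<or> (\<exists>i'. (i', a - 1) \<in> topk A k (a - 1) b)"
    proof (cases "a = 1")
      case False
      then obtain i' where i': "(i', a - 1) \<in> topk A k (a - 1) b\<^sub>0"
        using IH left by auto
      have "(i', a - 1) \<in> topk A k (a - 1) b"
        by (rule shrink[OF i']) (use left j in auto)
      then show ?thesis
        by blast
    qed simp
    ultimately show ?case
      using IH left j by auto
  next
    assume right: "j < b\<^sub>0 \<and> (a, b) = (Suc j, b\<^sub>0)"
    have "(i, j) \<in> topk A k j b\<^sub>0"
      by (rule shrink[OF ij]) (use j in auto)
    then have "(i, a - 1) \<in> topk A k (a - 1) b"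
      using right by auto
    moreover have "b = n \<or> (\<exists>i'. (i', Suc b) \<in> topk A k a (Suc b))"
    proof (cases "b = n")
      case False
      then obtain i' where i': "(i', Suc b) \<in> topk A k a\<^sub>0 (Suc b)"
        using IH right by auto
      have "(i', Suc b) \<in> topk A k a (Suc b)"
        by (rule shrink[OF i']) (use right j in auto)
      then show ?thesis
        by blast
    qed simp
    ultimately show ?case
      using IH right j by auto
  qed
qed

text \<open>An interior node [a, b] is charged to the neighbour column with the smaller maximum: it is
  recorded as b \<in> ends_charged_left A k n a if that column is a - 1, and as
  a \<in> starts_charged_right A k b if it is b + 1.\<close>

definition ends_charged_left :: "(nat \<Rightarrow> nat \<Rightarrow> 'a::linorder) \<Rightarrow> nat \<Rightarrow> nat \<Rightarrow> nat \<Rightarrow> nat set" where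
  "ends_charged_left A k n a = {b \<in> {a..<n}. count_greater A (a - 1) b (col_max A (a - 1)) < k
      \<and> col_max A (a - 1) < col_max A (Suc b)}"

definition starts_charged_right :: "(nat \<Rightarrow> nat \<Rightarrow> 'a::linorder) \<Rightarrow> nat \<Rightarrow> nat \<Rightarrow> nat set" where
  "starts_charged_right A k b = {a \<in> {2..b}. count_greater A a (Suc b) (col_max A (Suc b)) < k
      \<and> col_max A (Suc b) < col_max A (a - 1)}"

lemma finite_ends_charged_left [simp]: "finite (ends_charged_left A k n a)"
  by (simp add: ends_charged_left_def)

lemma finite_starts_charged_right [simp]: "finite (starts_charged_right A k b)"
  by (simp add: starts_charged_right_def)

lemma card_ends_charged_left_le: "card (ends_charged_left A k n a) \<le> k"
  by (rule card_right_ends_le[where a = "a - 1" and x = "col_max A (a - 1)"])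
    (auto simp: ends_charged_left_def)

lemma card_starts_charged_right_le: "card (starts_charged_right A k b) \<le> k"
  by (rule card_left_ends_le[where b = "Suc b" and x = "col_max A (Suc b)"])
    (auto simp: starts_charged_right_def)

lemma dag_nodes_subset_charged:
  assumes "inj_on (\<lambda>(i, j). A i j) ({1, 2} \<times> {1..n})" "0 < k" "1 \<le> n"
  shows "dag_nodes A k n \<subseteq> {1} \<times> {1..n} \<union> {1..n} \<times> {n} \<union> Sigma {2..n} (ends_charged_left A k n)
    \<union> (\<lambda>(b, a). (a, b)) ` Sigma {1..<n} (starts_charged_right A k)"
proof
  fix ab assume node: "ab \<in> dag_nodes A k n"
  obtain a b where ab: "ab = (a, b)"
    by fastforce
  note pinned = dag_nodes_pinned[OF node[unfolded ab] assms(2,3)]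
  show "ab \<in> {1} \<times> {1..n} \<union> {1..n} \<times> {n} \<union> Sigma {2..n} (ends_charged_left A k n)
    \<union> (\<lambda>(b, a). (a, b)) ` Sigma {1..<n} (starts_charged_right A k)"
  proof (cases "a = 1 \<or> b = n")
    case True
    with pinned show ?thesis
      by (auto simp: ab)
  next
    case interior: False
    with pinned obtain i i' where "(i, Suc b) \<in> topk A k a (Suc b)" "(i', a - 1) \<in> topk A k (a - 1) b"
      by blast
    then have counts: "count_greater A a (Suc b) (col_max A (Suc b)) < k"
        "count_greater A (a - 1) b (col_max A (a - 1)) < k"
      by (simp_all add: count_greater_col_max_lt)
    have "a - 1 \<noteq> Suc b" "a - 1 \<in> {1..n}" "Suc b \<in> {1..n}"
      using pinned interior by auto
    then have "col_max A (a - 1) \<noteq> col_max A (Suc b)"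
      by (rule inj_on_contraD[OF col_max_inj_on[OF assms(1)]])
    then consider "col_max A (a - 1) < col_max A (Suc b)" | "col_max A (Suc b) < col_max A (a - 1)"
      by fastforce
    then show ?thesis
    proof cases
      case 1
      then have "b \<in> ends_charged_left A k n a"
        using pinned interior counts by (simp add: ends_charged_left_def)
      then show ?thesis
        using pinned interior by (simp add: ab)
    next
      case 2
      then have "(b, a) \<in> Sigma {1..<n} (starts_charged_right A k)"
        using pinned interior counts by (simp add: starts_charged_right_def)
      then show ?thesis
        unfolding ab by (intro UnI2 rev_image_eqI) auto
    qed
  qed
qed

lemma card_Sigma_le:
  assumes "finite I" "\<And>i. i \<in> I \<Longrightarrow> finite (F i) \<and> card (F i) \<le> k"
  shows "card (Sigma I F) \<le> card I * k"
proof -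
  have "card (Sigma I F) = (\<Sum>i\<in>I. card (F i))"
    using assms by (simp add: card_SigmaI)
  also have "\<dots> \<le> card I * k"
    using assms(2) sum_bounded_above[of I "\<lambda>i. card (F i)" k] by simp
  finally show ?thesis .
qed

theorem lemma5:
  fixes A :: "nat \<Rightarrow> nat \<Rightarrow> 'a::linorder" and n k :: nat
  assumes "n \<ge> 1" and "k \<ge> 1"
    and "inj_on (\<lambda>(i, j). A i j) ({1, 2} \<times> {1..n})"
  shows "finite (dag_nodes A k n) \<and> card (dag_nodes A k n) \<le> 6 * k * n"
proof -
  let ?L = "Sigma {2..n} (ends_charged_left A k n)"
  let ?R = "Sigma {1..<n} (starts_charged_right A k)"
  let ?cover = "{1} \<times> {1..n} \<union> {1..n} \<times> {n} \<union> ?L \<union> (\<lambda>(b, a). (a, b)) ` ?R"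
  have sub: "dag_nodes A k n \<subseteq> ?cover"
    by (rule dag_nodes_subset_charged[OF assms(3)]) (use assms(1,2) in auto)
  have "card ?L \<le> card {2..n} * k"
    by (rule card_Sigma_le) (simp_all add: card_ends_charged_left_le)
  moreover have "card ?R \<le> card {1..<n} * k"
    by (rule card_Sigma_le) (simp_all add: card_starts_charged_right_le)
  ultimately have bounds: "card ?L \<le> n * k" "card ?R \<le> n * k"
    by (simp_all add: order_trans)
  have finite_cover: "finite ?cover"
    by simp
  have "card (dag_nodes A k n) \<le> card ?cover"
    using finite_cover sub by (rule card_mono)
  also have "\<dots> \<le> n + n + n * k + n * k"
    using bounds by (intro card_Un_le[THEN order_trans] add_mono card_image_le[THEN order_trans]) auto
  also have "\<dots> \<le> 4 * (n * k)"
    using mult_le_mono2[OF assms(2), of n] by linarith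
  also have "\<dots> \<le> 6 * k * n"
    by simp
  finally show ?thesis
    using finite_subset[OF sub finite_cover] by blast
qed

end
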